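(* Let $c\ge2$ and let $Y\subseteq\Sigma^c$ be a zero-set with $|Y|=4$. Then $Y$ survives one round of tornado tabulation with probability $\left(3-2/|\Sigma|\right)/|\Sigma|$.
   Context: Let $\Sigma=\{0,\dots,2^k-1\}$, identified with $k$-bit strings, $\oplus$ bitwise xor. A simple tabulation hash function $g:\Sigma^b\to\Sigma$ is $g(x_1\cdots x_b)=T_1[x_1]\oplus\cdots\oplus T_b[x_b]$ with independent fully random tables $T_i:\Sigma\to\Sigma$. Let $\tilde h_1,\tilde h_2,\dots$ be mutually independent simple tabulation functions with $\tilde h_i:\Sigma^{c+i-1}\to\Sigma$. The simple derived key (with $d$ rounds) of $x=x_1\cdots x_c$ is $\tilde h'(x)=\tilde x_1\cdots\tilde x_{c+d}$ with $\tilde x_i=x_i$ for $i\le c$ and $\tilde x_i=\tilde h_{i-c}(\tilde x_1\cdots\tilde x_{i-1})$ for $c<i\le c+d$. A set $Y$ of keys in $\Sigma^b$ is a zero-set if for every position $i$ and every character $a$, the number of $y\in Y$ with $y_i=a$ is even. A zero-set $Y\subseteq\Sigma^c$ survives $d$ rounds of tornado tabulation if $\tilde h'(Y)\subseteq\Sigma^{c+d}$ is a zero-set; "one round" means $d=1$. *)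

theory Defs
  imports "HOL-Probability.Probability"
begin

definition Sigma :: "nat \<Rightarrow> nat set" where
  "Sigma k = {0..<2^k}"

definition keys :: "nat \<Rightarrow> nat \<Rightarrow> nat list set" where
  "keys k b = {x. length x = b \<and> set x \<subseteq> Sigma k}"

definition zero_set :: "nat \<Rightarrow> nat list set \<Rightarrow> bool" where
  "zero_set b Y \<longleftrightarrow> (\<forall>i<b. \<forall>a. even (card {y\<in>Y. y ! i = a}))"

definition simple_tab :: "(nat \<Rightarrow> nat \<Rightarrow> nat) \<Rightarrow> nat list \<Rightarrow> nat" where
  "simple_tab T x = foldr (\<lambda>i acc. xor (T i (x ! i)) acc) [0..<length x] 0"

definition tables :: "nat \<Rightarrow> nat \<Rightarrow> (nat \<Rightarrow> nat \<Rightarrow> nat) set" where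
  "tables k b = PiE {0..<b} (\<lambda>_. PiE (Sigma k) (\<lambda>_. Sigma k))"

definition derived_key1 :: "(nat \<Rightarrow> nat \<Rightarrow> nat) \<Rightarrow> nat list \<Rightarrow> nat list" where
  "derived_key1 T x = x @ [simple_tab T x]"

definition survives1 :: "nat \<Rightarrow> (nat \<Rightarrow> nat \<Rightarrow> nat) \<Rightarrow> nat list set \<Rightarrow> bool" where
  "survives1 c T Y \<longleftrightarrow> zero_set (c + 1) (derived_key1 T ` Y)"

end

(* Write Y = {w, x, y, z} and h for the simple tabulation function of the first round.
   Since Y is a zero-set, at every position the four characters agree in pairs, so by
   linearity h w XOR h x XOR h y XOR h z = 0; given this, the four hash values agree in
   pairs iff two of h w, h x, h y coincide, i.e. iff (h w XOR h x, h w XOR h y) is one of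
   the 3 |Sigma| - 2 pairs (a, b) with a = 0, b = 0 or a = b.  Xoring e into the table
   entry T_p[w_p] is a bijection on tables that shifts this pair by e times the pattern
   ([x_p <> w_p], [y_p <> w_p]).  Four distinct keys forming a zero-set have two positions
   with distinct nonzero patterns, and these span GF(2)^2, so the pair is uniformly
   distributed on Sigma x Sigma. *)

theory Submission
  imports Defs
begin

unbundle bit_operations_syntax

lemma xor_left_cancel [simp]: "a XOR (a XOR b) = (b :: 'a :: semiring_bit_operations)"
  by (simp add: xor.assoc [symmetric])

lemma xor_eq_0_iff: "a XOR b = 0 \<longleftrightarrow> a = (b :: 'a :: semiring_bit_operations)"
  by (metis xor_left_cancel xor.right_neutral xor_self_eq)

lemma xor_left_inject: "a XOR b = a XOR c \<longleftrightarrow> b = (c :: 'a :: semiring_bit_operations)"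
  by (metis xor_left_cancel)

lemma xor_in_Sigma: "a \<in> Sigma k \<Longrightarrow> b \<in> Sigma k \<Longrightarrow> a XOR b \<in> Sigma k"
  by (simp add: Sigma_def) (metis take_bit_nat_eq_self_iff take_bit_xor)

lemma zero_in_Sigma: "0 \<in> Sigma k"
  by (simp add: Sigma_def)

lemma finite_Sigma: "finite (Sigma k)"
  by (simp add: Sigma_def)

definition paired :: "'a \<Rightarrow> 'a \<Rightarrow> 'a \<Rightarrow> 'a \<Rightarrow> bool" where
  "paired a b c d \<longleftrightarrow> (a = b \<and> c = d) \<or> (a = c \<and> b = d) \<or> (a = d \<and> b = c)"

lemma card_filter_four:
  assumes "distinct [w, x, y, z]"
  shows "card {v \<in> {w, x, y, z}. f v = a}
    = of_bool (f w = a) + of_bool (f x = a) + of_bool (f y = a) + of_bool (f z = a)"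
proof -
  have insert_filter: "{v \<in> insert u V. f v = a}
      = (if f u = a then insert u {v \<in> V. f v = a} else {v \<in> V. f v = a})" for u V
    by auto
  from assms show ?thesis
    unfolding insert_filter by (simp add: card_insert_if)
qed

lemma even_card_fibres_four_iff_paired:
  assumes "distinct [w, x, y, z]"
  shows "(\<forall>a. even (card {v \<in> {w, x, y, z}. f v = a})) \<longleftrightarrow> paired (f w) (f x) (f y) (f z)"
proof
  assume even_fibres: "\<forall>a. even (card {v \<in> {w, x, y, z}. f v = a})"
  have "even (of_bool (f w = a) + of_bool (f x = a) + of_bool (f y = a) + of_bool (f z = a) :: nat)"
    for a using even_fibres card_filter_four [OF assms, of f a] by metis
  from this [of "f w"] this [of "f x"] this [of "f y"] show "paired (f w) (f x) (f y) (f z)"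
    unfolding paired_def by (auto split: if_splits)
next
  assume "paired (f w) (f x) (f y) (f z)"
  then show "\<forall>a. even (card {v \<in> {w, x, y, z}. f v = a})"
    unfolding card_filter_four [OF assms] paired_def
    by (intro allI, elim disjE conjE; cases "f w = a"; cases "f y = a"; cases "f x = a"; cases "f z = a"; simp)
qed

lemma zero_set_four_iff:
  assumes "distinct [w, x, y, z]"
  shows "zero_set b {w, x, y, z} \<longleftrightarrow> (\<forall>i<b. paired (w ! i) (x ! i) (y ! i) (z ! i))"
proof -
  have "(\<forall>a. even (card {v \<in> {w, x, y, z}. v ! i = a})) \<longleftrightarrow> paired (w ! i) (x ! i) (y ! i) (z ! i)"
    for i by (rule even_card_fibres_four_iff_paired [OF assms])
  then show ?thesis
    unfolding zero_set_def by simp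
qed

lemma paired_image: "paired a b c d \<Longrightarrow> paired (f a) (f b) (f c) (f d)"
  by (auto simp: paired_def)

lemma paired_xor_eq_0:
  "paired a b c d \<Longrightarrow> a XOR b XOR c XOR d = (0 :: 'a :: semiring_bit_operations)"
  by (auto simp: paired_def xor.left_commute)

lemma paired_iff_if_xor_eq_0:
  fixes a b c d :: "'a :: semiring_bit_operations"
  assumes "a XOR b XOR c XOR d = 0"
  shows "paired a b c d \<longleftrightarrow> a = b \<or> a = c \<or> b = c"
proof -
  have "d = a XOR b XOR c"
    using assms by (metis xor_eq_0_iff xor.assoc)
  then show ?thesis
    by (auto simp: paired_def xor.left_commute xor_left_inject)
qed

lemma simple_tab_in_Sigma:
  assumes "T \<in> tables k c" and "v \<in> keys k c"
  shows "simple_tab T v \<in> Sigma k"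
proof -
  have "foldr (\<lambda>i acc. T i (v ! i) XOR acc) ns 0 \<in> Sigma k" if "set ns \<subseteq> {..<c}" for ns
    using that
  proof (induction ns)
    case (Cons i ns)
    from assms(2) have "set v \<subseteq> Sigma k" and "length v = c"
      by (auto simp: keys_def)
    with Cons.prems have "i < c" and "v ! i \<in> Sigma k"
      using nth_mem [of i v] by auto
    with assms(1) have "T i (v ! i) \<in> Sigma k"
      by (auto simp: tables_def)
    with Cons show ?case
      by (simp add: xor_in_Sigma)
  qed (simp add: zero_in_Sigma)
  with assms show ?thesis
    by (auto simp: simple_tab_def keys_def atLeast0LessThan)
qed

lemma simple_tab_xor_eq_0_if_paired:
  assumes "length x = length w" "length y = length w" "length z = length w"
    and "\<And>i. i < length w \<Longrightarrow> paired (w ! i) (x ! i) (y ! i) (z ! i)"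
  shows "simple_tab T w XOR simple_tab T x XOR simple_tab T y XOR simple_tab T z = 0"
proof -
  let ?tab = "\<lambda>v ns. foldr (\<lambda>i acc. T i (v ! i) XOR acc) ns 0"
  have "?tab w ns XOR ?tab x ns XOR ?tab y ns XOR ?tab z ns = 0" if "set ns \<subseteq> {..<length w}" for ns
    using that
  proof (induction ns)
    case (Cons i ns)
    then have "T i (w ! i) XOR T i (x ! i) XOR T i (y ! i) XOR T i (z ! i) = 0"
      using assms(4) by (auto intro: paired_xor_eq_0 paired_image)
    with Cons show ?case
      by (simp add: xor.assoc xor.commute xor.left_commute)
  qed simp
  from this [of "[0..<length w]"] assms(1-3) show ?thesis
    by (simp add: simple_tab_def atLeast0LessThan)
qed

definition table_xor :: "(nat \<Rightarrow> nat \<Rightarrow> nat) \<Rightarrow> nat \<Rightarrow> nat \<Rightarrow> nat \<Rightarrow> nat \<Rightarrow> nat \<Rightarrow> nat" where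
  "table_xor T p e a = T(p := (T p)(e := T p e XOR a))"

lemma simple_tab_table_xor:
  "simple_tab (table_xor T p e a) v = simple_tab T v XOR (if p < length v \<and> v ! p = e then a else 0)"
proof -
  have "foldr (\<lambda>i acc. table_xor T p e a i (v ! i) XOR acc) ns 0
      = foldr (\<lambda>i acc. T i (v ! i) XOR acc) ns 0 XOR (if p \<in> set ns \<and> v ! p = e then a else 0)"
    if "distinct ns" for ns
    using that by (induction ns) (auto simp: table_xor_def xor.assoc xor.commute xor.left_commute)
  then show ?thesis
    by (simp add: simple_tab_def)
qed

lemma table_xor_table_xor [simp]: "table_xor (table_xor T p e a) p e a = T"
  by (auto simp: table_xor_def xor.assoc)

lemma table_xor_in_tables:
  "T \<in> tables k c \<Longrightarrow> p < c \<Longrightarrow> e \<in> Sigma k \<Longrightarrow> a \<in> Sigma k \<Longrightarrow> table_xor T p e a \<in> tables k c"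
  by (auto simp: tables_def table_xor_def PiE_iff extensional_def xor_in_Sigma)

lemma bij_betw_table_xor:
  "p < c \<Longrightarrow> e \<in> Sigma k \<Longrightarrow> a \<in> Sigma k \<Longrightarrow> bij_betw (\<lambda>T. table_xor T p e a) (tables k c) (tables k c)"
  by (rule bij_betwI [where g = "\<lambda>T. table_xor T p e a"]) (auto simp: table_xor_in_tables)

lemma finite_tables: "finite (tables k c)"
  by (simp add: tables_def finite_PiE finite_Sigma)

lemma tables_nonempty: "tables k c \<noteq> {}"
  by (auto simp: tables_def PiE_eq_empty_iff zero_in_Sigma)

lemma card_fibre_shift:
  assumes "bij_betw \<phi> A A" and "\<And>T. T \<in> A \<Longrightarrow> D (\<phi> T) = s (D T)" and "inj s"
  shows "card {T \<in> A. D T = s q} = card {T \<in> A. D T = q}"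
proof -
  have "\<phi> ` {T \<in> A. D T = q} = {T \<in> A. D T = s q}"
  proof (intro equalityI subsetI)
    fix T assume T: "T \<in> {T \<in> A. D T = s q}"
    then obtain T0 where "T0 \<in> A" "T = \<phi> T0"
      using assms(1) by (auto simp: bij_betw_def)
    with T assms(2,3) show "T \<in> \<phi> ` {T \<in> A. D T = q}"
      by (auto dest: injD)
  qed (use assms(1,2) in \<open>auto simp: bij_betw_def\<close>)
  moreover have "inj_on \<phi> {T \<in> A. D T = q}"
    using assms(1) by (auto simp: bij_betw_def intro: inj_on_subset)
  ultimately show ?thesis
    by (metis card_image)
qed

lemma map_pmf_of_set_equal_fibres:
  assumes "finite A" "A \<noteq> {}" "finite B" "D ` A \<subseteq> B"
    and fibres: "\<And>q. q \<in> B \<Longrightarrow> card {T \<in> A. D T = q} = m"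
  shows "map_pmf D (pmf_of_set A) = pmf_of_set B"
proof (rule pmf_eqI)
  fix q
  have "card A = card (\<Union>q\<in>B. {T \<in> A. D T = q})"
    using assms(4) by (intro arg_cong [where f = card]) auto
  also have "\<dots> = (\<Sum>q\<in>B. card {T \<in> A. D T = q})"
    using assms(1,3) by (intro card_UN_disjoint) auto
  finally have card_A: "card A = card B * m"
    using fibres by simp
  with assms(1,2) have "card B * m > 0"
    by (metis card_gt_0_iff)
  then have "m > 0" "card B > 0"
    by simp_all
  have "pmf (map_pmf D (pmf_of_set A)) q = card {T \<in> A. D T = q} / card A"
    using assms(1,2) by (simp add: pmf_map measure_pmf_of_set Int_def vimage_def)
  also have "\<dots> = indicator B q / card B"
  proof (cases "q \<in> B")
    case True
    with \<open>m > 0\<close> show ?thesis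
      by (simp add: fibres card_A)
  next
    case False
    with assms(4) have empty_fibre: "{T \<in> A. D T = q} = {}"
      by auto
    from False show ?thesis
      unfolding empty_fibre by simp
  qed
  also have "\<dots> = pmf (pmf_of_set B) q"
    using \<open>card B > 0\<close> assms(3) by (simp add: card_gt_0_iff)
  finally show "pmf (map_pmf D (pmf_of_set A)) q = pmf (pmf_of_set B) q" .
qed

lemma xor_system_solvable:
  fixes a b :: "'a :: semiring_bit_operations"
  assumes "(u1, v1) \<noteq> (False, False)" "(u2, v2) \<noteq> (False, False)" "(u1, v1) \<noteq> (u2, v2)"
    and "a \<in> S" "b \<in> S" "a XOR b \<in> S"
  shows "\<exists>e1\<in>S. \<exists>e2\<in>S. (if u1 then e1 else 0) XOR (if u2 then e2 else 0) = a
                      \<and> (if v1 then e1 else 0) XOR (if v2 then e2 else 0) = b"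
proof -
  have "\<exists>e1\<in>{a, b, a XOR b}. \<exists>e2\<in>{a, b, a XOR b}.
      (if u1 then e1 else 0) XOR (if u2 then e2 else 0) = a
    \<and> (if v1 then e1 else 0) XOR (if v2 then e2 else 0) = b"
    using assms(1-3)
    by (cases u1; cases v1; cases u2; cases v2) (simp_all add: xor.assoc xor.commute xor.left_commute)
  with assms(4-6) show ?thesis
    by blast
qed

lemma card_dependent_pairs:
  fixes S :: "'a :: zero set"
  assumes "finite S" "0 \<in> S"
  shows "card (S \<times> S \<inter> {(a, b). a = 0 \<or> b = 0 \<or> a = b}) + 2 = 3 * card S"
proof -
  let ?row = "\<lambda>a. if a = 0 then S else {0, a}"
  have "S \<times> S \<inter> {(a, b). a = 0 \<or> b = 0 \<or> a = b} = (SIGMA a:S. ?row a)"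
    using assms(2) by (auto split: if_splits)
  then have "card (S \<times> S \<inter> {(a, b). a = 0 \<or> b = 0 \<or> a = b}) = (\<Sum>a\<in>S. card (?row a))"
    using assms(1) by (simp add: card_SigmaI)
  also have "\<dots> = card S + (\<Sum>a\<in>S - {0}. card (?row a))"
    using assms by (simp add: sum.remove)
  also have "(\<Sum>a\<in>S - {0}. card (?row a)) = (\<Sum>a\<in>S - {0}. 2)"
    by (intro sum.cong) auto
  also have "\<dots> = 2 * (card S - 1)"
    using assms by simp
  finally show ?thesis
    using assms card_gt_0_iff [of S] by auto
qed

locale four_key_zero_set =
  fixes k c :: nat and w x y z :: "nat list"
  assumes distinct: "distinct [w, x, y, z]"
    and keys: "{w, x, y, z} \<subseteq> keys k c"
    and is_zero_set: "zero_set c {w, x, y, z}"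
begin

lemma length_eq: "length w = c" "length x = c" "length y = c" "length z = c"
  using keys by (auto simp: keys_def)

lemma paired_nth: "i < c \<Longrightarrow> paired (w ! i) (x ! i) (y ! i) (z ! i)"
  using is_zero_set zero_set_four_iff [OF distinct] by blast

definition hash_diffs :: "(nat \<Rightarrow> nat \<Rightarrow> nat) \<Rightarrow> nat \<times> nat" where
  "hash_diffs T = (simple_tab T w XOR simple_tab T x, simple_tab T w XOR simple_tab T y)"

lemma survives1_iff_hash_diffs:
  "survives1 c T {w, x, y, z} \<longleftrightarrow> hash_diffs T \<in> {(a, b). a = 0 \<or> b = 0 \<or> a = b}"
proof -
  let ?h = "simple_tab T" and ?d = "derived_key1 T"
  have "distinct [?d w, ?d x, ?d y, ?d z]"
    using distinct by (auto simp: derived_key1_def)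
  then have "survives1 c T {w, x, y, z}
      \<longleftrightarrow> (\<forall>i<c + 1. paired (?d w ! i) (?d x ! i) (?d y ! i) (?d z ! i))"
    unfolding survives1_def image_insert image_empty by (rule zero_set_four_iff)
  also have "\<dots> \<longleftrightarrow> paired (?h w) (?h x) (?h y) (?h z)"
    using paired_nth by (auto simp: less_Suc_eq derived_key1_def nth_append length_eq)
  also have "\<dots> \<longleftrightarrow> ?h w = ?h x \<or> ?h w = ?h y \<or> ?h x = ?h y"
    by (rule paired_iff_if_xor_eq_0, rule simple_tab_xor_eq_0_if_paired)
      (simp_all add: length_eq paired_nth)
  finally show ?thesis
    by (auto simp: hash_diffs_def xor_eq_0_iff xor_left_inject)
qed

lemma hash_diffs_image_subset: "hash_diffs ` tables k c \<subseteq> Sigma k \<times> Sigma k"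
  using keys by (auto simp: hash_diffs_def intro!: xor_in_Sigma simple_tab_in_Sigma)

lemma hash_diffs_table_xor:
  "p < c \<Longrightarrow> hash_diffs (table_xor T p (w ! p) e)
    = (fst (hash_diffs T) XOR (if x ! p \<noteq> w ! p then e else 0),
       snd (hash_diffs T) XOR (if y ! p \<noteq> w ! p then e else 0))"
  by (auto simp: hash_diffs_def simple_tab_table_xor length_eq xor.assoc xor.commute xor.left_commute)

definition diff_pattern :: "nat \<Rightarrow> bool \<times> bool" where
  "diff_pattern p = (x ! p \<noteq> w ! p, y ! p \<noteq> w ! p)"

lemma two_diff_patterns:
  "\<exists>i<c. \<exists>j<c. diff_pattern i \<noteq> (False, False) \<and> diff_pattern j \<noteq> (False, False)
    \<and> diff_pattern i \<noteq> diff_pattern j"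
proof (rule ccontr)
  assume no_two: "\<not> ?thesis"
  have "x \<noteq> w"
    using distinct by auto
  then obtain i where i: "i < c" "x ! i \<noteq> w ! i"
    using length_eq by (metis nth_equalityI)
  have "diff_pattern i \<noteq> (False, False)"
    using i(2) by (simp add: diff_pattern_def)
  with no_two i(1) have same_pattern: "diff_pattern p = (False, False) \<or> diff_pattern p = diff_pattern i"
    if "p < c" for p
    using that by blast
  show False
  proof (cases "y ! i = w ! i")
    case True
    with same_pattern have "y ! p = w ! p" if "p < c" for p
      using that by (auto simp: diff_pattern_def)
    then have "y = w"
      by (intro nth_equalityI) (simp_all add: length_eq)
    with distinct show False
      by simp
  next
    case False
    with i(2) have "diff_pattern i = (True, True)"
      by (simp add: diff_pattern_def)
    with same_pattern have "x ! p = w ! p \<and> y ! p = w ! p \<or> x ! p \<noteq> w ! p \<and> y ! p \<noteq> w ! p"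
      if "p < c" for p
      using that by (auto simp: diff_pattern_def)
    with paired_nth have "x ! p = y ! p" if "p < c" for p
      using that unfolding paired_def by metis
    then have "x = y"
      by (intro nth_equalityI) (simp_all add: length_eq)
    with distinct show False
      by simp
  qed
qed

lemma shift_hash_diffs:
  assumes "a \<in> Sigma k" "b \<in> Sigma k"
  obtains \<phi> where "bij_betw \<phi> (tables k c) (tables k c)"
    and "\<And>T. hash_diffs (\<phi> T) = (a XOR fst (hash_diffs T), b XOR snd (hash_diffs T))"
proof -
  obtain i j where ij: "i < c" "j < c" "diff_pattern i \<noteq> (False, False)"
    "diff_pattern j \<noteq> (False, False)" "diff_pattern i \<noteq> diff_pattern j"
    using two_diff_patterns by blast
  obtain e1 e2 where e: "e1 \<in> Sigma k" "e2 \<in> Sigma k"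
    "(if x ! i \<noteq> w ! i then e1 else 0) XOR (if x ! j \<noteq> w ! j then e2 else 0) = a"
    "(if y ! i \<noteq> w ! i then e1 else 0) XOR (if y ! j \<noteq> w ! j then e2 else 0) = b"
    using xor_system_solvable [OF ij(3-5) [unfolded diff_pattern_def] assms xor_in_Sigma [OF assms]]
    by blast
  have w_nth: "w ! i \<in> Sigma k" "w ! j \<in> Sigma k"
    using keys ij(1,2) length_eq by (auto simp: keys_def)
  show ?thesis
  proof
    show "bij_betw (\<lambda>T. table_xor (table_xor T j (w ! j) e2) i (w ! i) e1) (tables k c) (tables k c)"
      using bij_betw_trans [OF bij_betw_table_xor [OF ij(2) w_nth(2) e(2)]
          bij_betw_table_xor [OF ij(1) w_nth(1) e(1)]]
      by (simp add: comp_def)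
    show "hash_diffs (table_xor (table_xor T j (w ! j) e2) i (w ! i) e1)
        = (a XOR fst (hash_diffs T), b XOR snd (hash_diffs T))" for T
      using ij(1,2) unfolding e(3,4) [symmetric]
      by (simp add: hash_diffs_table_xor xor.assoc xor.commute xor.left_commute)
  qed
qed

lemma map_pmf_hash_diffs:
  "map_pmf hash_diffs (pmf_of_set (tables k c)) = pmf_of_set (Sigma k \<times> Sigma k)"
proof (rule map_pmf_of_set_equal_fibres)
  show "card {T \<in> tables k c. hash_diffs T = q} = card {T \<in> tables k c. hash_diffs T = (0, 0)}"
    if q_in: "q \<in> Sigma k \<times> Sigma k" for q
  proof -
    obtain a b where q: "q = (a, b)" "a \<in> Sigma k" "b \<in> Sigma k"
      using q_in by blast
    define shift where "shift p = (a XOR fst p, b XOR snd p)" for p :: "nat \<times> nat"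
    obtain \<phi> where bij: "bij_betw \<phi> (tables k c) (tables k c)"
      and shifted: "\<And>T. hash_diffs (\<phi> T) = shift (hash_diffs T)"
      using shift_hash_diffs [OF q(2,3)] unfolding shift_def by blast
    have "inj shift"
      by (auto simp: inj_def shift_def prod_eq_iff xor_left_inject)
    with bij shifted have "card {T \<in> tables k c. hash_diffs T = shift (0, 0)}
        = card {T \<in> tables k c. hash_diffs T = (0, 0)}"
      by (intro card_fibre_shift)
    then show ?thesis
      by (simp add: shift_def q(1))
  qed
qed (simp_all add: finite_tables tables_nonempty finite_Sigma hash_diffs_image_subset)

end

theorem lemma8p1:
  fixes k c :: nat and Y :: "nat list set"
  assumes "c \<ge> 2"
    and "Y \<subseteq> keys k c"
    and "zero_set c Y"
    and "card Y = 4"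
  shows "measure_pmf.prob (pmf_of_set (tables k c)) {T. survives1 c T Y}
         = (3 - 2 / real (card (Sigma k))) / real (card (Sigma k))"
proof -
  obtain w x y z where Y: "Y = {w, x, y, z}" and "distinct [w, x, y, z]"
    using assms(4) by (auto simp: card_Suc_eq numeral_eq_Suc)
  with assms(2,3) interpret four_key_zero_set k c w x y z
    by unfold_locales simp_all
  let ?G = "{(a, b). a = 0 \<or> b = 0 \<or> a = b}" and ?n = "real (card (Sigma k))"
  have card_G: "real (card (Sigma k \<times> Sigma k \<inter> ?G)) = 3 * ?n - 2"
    using arg_cong [where f = real, OF card_dependent_pairs [OF finite_Sigma zero_in_Sigma, of k]]
    by simp
  have "{T. survives1 c T Y} = hash_diffs -` ?G"
    using Y survives1_iff_hash_diffs by auto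
  then have "measure_pmf.prob (pmf_of_set (tables k c)) {T. survives1 c T Y}
      = measure_pmf.prob (pmf_of_set (Sigma k \<times> Sigma k)) ?G"
    by (simp flip: map_pmf_hash_diffs)
  also have "\<dots> = (3 * ?n - 2) / (?n * ?n)"
    using zero_in_Sigma finite_Sigma card_G
    by (subst measure_pmf_of_set) (auto simp: card_cartesian_product)
  also have "\<dots> = (3 - 2 / ?n) / ?n"
  proof -
    have "?n \<noteq> 0"
      using finite_Sigma [of k] zero_in_Sigma [of k] by auto
    then show ?thesis
      by (simp add: field_simps)
  qed
  finally show ?thesis .
qed

end
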